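(* Let $\mu$ be a Lévy measure as in the context which is absolutely continuous with density satisfying $\frac{d\mu}{dz}(z)\ge\frac{1}{|z|^d\nu(|z|)}$ for a nondecreasing function $\nu:(0,\infty)\to[0,\infty]$ with $\lim_{s\to0^+}\nu(s)=0$. Let $(\phi_n)_{n\in\mathbb{N}}\subset L^2(\mathbb{R}^d)$ satisfy $$\sup_n\frac12\int_{\mathbb{R}^d}\int_{|z|>1/n}(\phi_n(x+z)-\phi_n(x))^2\,d\mu(z)\,dx<\infty.$$ Then $\lim_{|y|\to0}\sup_n\|\phi_n(\cdot+y)-\phi_n\|_{L^2(\mathbb{R}^d)}=0$.
   Context: $\mu$ is a symmetric nonnegative Radon measure on $\mathbb{R}^d\setminus\{0\}$ with $\int(|z|^2\wedge1)\,d\mu(z)<\infty$. *)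

theory Defs
  imports "HOL-Analysis.Analysis"
begin

definition L2_norm :: "('a::euclidean_space \<Rightarrow> real) \<Rightarrow> real" where
  "L2_norm g = sqrt (integral\<^sup>L lborel (\<lambda>x. (g x)^2))"

text \<open>Symmetric nonnegative measure on R^d minus the origin with the Levy integrability
  condition; measures of this form are given on the Borel sets of R^d and do not charge 0.\<close>
definition levy_measure :: "'a::euclidean_space measure \<Rightarrow> bool" where
  "levy_measure \<mu> \<longleftrightarrow> sets \<mu> = sets borel
     \<and> emeasure \<mu> {0} = 0
     \<and> (\<forall>A\<in>sets borel. emeasure \<mu> (uminus ` A) = emeasure \<mu> A)
     \<and> (\<integral>\<^sup>+ z. ennreal (min ((norm z)^2) 1) \<partial>\<mu>) < \<infinity>"

end

theory Submission
  imports Defs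
begin

text \<open>Write E(y) for the squared L^2 norm of \<phi>(\<cdot> + y) - \<phi>. For a single L^2 function
  E(y) tends to 0 (approximate by simple functions, and level sets by compact and open sets),
  so only large n matter. From E(y) \<le> 2 E(z) + 2 E(z - y), averaging over z in a ball of
  radius s centred at distance 3s from the origin (with |y| \<le> s) bounds E(y) by s^-d times the
  integral of E over the shell s < |z| \<le> 5s. There the density is at least 1 / ((5s)^d \<nu>(5s)),
  so E(y) is at most a constant times \<nu>(5s) times the truncated energy over |z| > 1/n, which is
  uniformly small once s = max |y| (1/n) is small.\<close>

lemma tendsto_zero_ennrealI:
  fixes f :: "'b \<Rightarrow> ennreal"
  assumes "\<And>e::real. e > 0 \<Longrightarrow> eventually (\<lambda>y. f y \<le> ennreal e) F"
  shows "(f \<longlongrightarrow> 0) F"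
proof (rule tendsto_zero_ennreal)
  fix e :: real assume "e > 0"
  then have "ennreal (e/2) < ennreal e" by (simp add: ennreal_lessI)
  with assms[of "e/2"] \<open>e > 0\<close> show "eventually (\<lambda>y. f y < ennreal e) F"
    by (auto elim: eventually_mono)
qed

lemma eventually_le_ennreal_of_tendsto_zero:
  fixes f :: "'b \<Rightarrow> ennreal"
  assumes "(f \<longlongrightarrow> 0) F" "e > 0"
  shows "eventually (\<lambda>y. f y \<le> ennreal e) F"
  using order_tendstoD(2)[OF assms(1), of "ennreal e"] assms(2)
  by (auto elim: eventually_mono)

lemma nn_integral_lborel_translate:
  fixes h :: "'a::euclidean_space \<Rightarrow> ennreal"
  assumes "h \<in> borel_measurable borel"
  shows "(\<integral>\<^sup>+ x. h (x + y) \<partial>lborel) = (\<integral>\<^sup>+ x. h x \<partial>lborel)"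
proof -
  have "(\<integral>\<^sup>+ x. h x \<partial>lborel) = (\<integral>\<^sup>+ x. h x \<partial>distr lborel borel ((+) y))"
    by (simp add: lborel_distr_plus)
  also have "\<dots> = (\<integral>\<^sup>+ x. h (y + x) \<partial>lborel)"
    using assms by (subst nn_integral_distr) auto
  finally show ?thesis by (simp add: add.commute)
qed

lemma emeasure_lborel_translate:
  fixes A :: "'a::euclidean_space set"
  assumes "A \<in> sets borel"
  shows "emeasure lborel {x. x + y \<in> A} = emeasure lborel A"
proof -
  have "{x. x + y \<in> A} \<in> sets borel"
    using measurable_sets[OF _ assms, of "\<lambda>x. x + y" borel] by (simp add: vimage_def)
  then have "emeasure lborel {x. x + y \<in> A} = (\<integral>\<^sup>+ x. indicator {x. x + y \<in> A} x \<partial>lborel)"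
    by simp
  also have "\<dots> = (\<integral>\<^sup>+ x. indicator A (x + y) \<partial>lborel)"
    by (simp add: indicator_def)
  also have "\<dots> = emeasure lborel A"
    using assms by (simp add: nn_integral_lborel_translate)
  finally show ?thesis .
qed

lemma lborel_inner_regular_compact:
  fixes S :: "'a::euclidean_space set"
  assumes S: "S \<in> sets borel" "emeasure lborel S < \<infinity>" and "e > 0"
  obtains K where "compact K" "K \<subseteq> S" "emeasure lborel (S - K) < ennreal e"
proof -
  let ?M = "density lborel (indicator S)"
  have M: "emeasure ?M B = emeasure lborel (S \<inter> B)" if "B \<in> sets borel" for B
    using that S by (auto simp: emeasure_density indicator_inter_arith[symmetric])
  have "emeasure lborel S = emeasure ?M S"
    using S by (simp add: M)
  also have "\<dots> = (SUP K \<in> {K. K \<subseteq> S \<and> compact K}. emeasure ?M K)"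
    using S by (intro inner_regular) (auto simp: M)
  also have "\<dots> = (SUP K \<in> {K. K \<subseteq> S \<and> compact K}. emeasure lborel K)"
    by (rule SUP_cong) (auto simp: M borel_compact Int_absorb1)
  finally have sup: "emeasure lborel S = (SUP K \<in> {K. K \<subseteq> S \<and> compact K}. emeasure lborel K)" .
  have "\<exists>K \<in> {K. K \<subseteq> S \<and> compact K}. emeasure lborel S < emeasure lborel K + e"
    by (rule SUP_approx_ennreal[OF \<open>e > 0\<close> _ sup]) (use S in auto)
  then obtain K where K: "K \<subseteq> S" "compact K" "emeasure lborel S < emeasure lborel K + e"
    by blast
  have "emeasure lborel K \<le> emeasure lborel S"
    using K S by (intro emeasure_mono) auto
  then have "emeasure lborel (S - K) < ennreal e"
    using K S by (simp add: emeasure_Diff borel_compact minus_less_iff_ennreal add.commute)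
  with K show ?thesis using that by blast
qed

section \<open>Shift energy\<close>

definition shift_energy :: "('a::euclidean_space \<Rightarrow> real) \<Rightarrow> 'a \<Rightarrow> ennreal" where
  "shift_energy g y = (\<integral>\<^sup>+ x. ennreal ((g (x + y) - g x)^2) \<partial>lborel)"

lemma ennreal_power2_diff_le:
  fixes a b c :: real
  shows "ennreal ((a - b)^2) \<le> 2 * ennreal ((a - c)^2) + 2 * ennreal ((c - b)^2)"
proof -
  have "(a - b)^2 \<le> 2 * (a - c)^2 + 2 * (c - b)^2"
    using zero_le_power2[of "a - 2 * c + b"] by (simp add: power2_eq_square algebra_simps)
  then have "ennreal ((a - b)^2) \<le> ennreal (2 * (a - c)^2 + 2 * (c - b)^2)"
    by (rule ennreal_leI)
  also have "\<dots> = 2 * ennreal ((a - c)^2) + 2 * ennreal ((c - b)^2)"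
    by (simp add: ennreal_plus ennreal_mult)
  finally show ?thesis .
qed

lemma shift_energy_add:
  fixes g h :: "'a::euclidean_space \<Rightarrow> real"
  assumes [measurable]: "g \<in> borel_measurable borel" "h \<in> borel_measurable borel"
  shows "shift_energy (\<lambda>x. g x + h x) y \<le> 2 * shift_energy g y + 2 * shift_energy h y"
proof -
  have "shift_energy (\<lambda>x. g x + h x) y \<le> (\<integral>\<^sup>+ x. 2 * ennreal ((g (x + y) - g x)^2)
      + 2 * ennreal ((h (x + y) - h x)^2) \<partial>lborel)"
    unfolding shift_energy_def
  proof (rule nn_integral_mono)
    fix x
    show "ennreal ((g (x + y) + h (x + y) - (g x + h x))^2)
        \<le> 2 * ennreal ((g (x + y) - g x)^2) + 2 * ennreal ((h (x + y) - h x)^2)"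
      using ennreal_power2_diff_le[of "g (x + y) + h (x + y)" "g x + h x" "g x + h (x + y)"]
      by simp
  qed
  also have "\<dots> = 2 * shift_energy g y + 2 * shift_energy h y"
    unfolding shift_energy_def by (simp add: nn_integral_add nn_integral_cmult)
  finally show ?thesis .
qed

lemma shift_energy_cmult:
  fixes g :: "'a::euclidean_space \<Rightarrow> real"
  assumes [measurable]: "g \<in> borel_measurable borel"
  shows "shift_energy (\<lambda>x. c * g x) = (\<lambda>y. ennreal (c^2) * shift_energy g y)"
  unfolding shift_energy_def
  by (simp add: ennreal_mult' power_mult_distrib nn_integral_cmult
      flip: right_diff_distrib)

lemma shift_energy_minus:
  fixes g :: "'a::euclidean_space \<Rightarrow> real"
  assumes [measurable]: "g \<in> borel_measurable borel"
  shows "shift_energy g (- y) = shift_energy g y"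
proof -
  have "shift_energy g (- y) = (\<integral>\<^sup>+ x. ennreal ((g (x + y + - y) - g (x + y))^2) \<partial>lborel)"
    unfolding shift_energy_def
    by (rule nn_integral_lborel_translate[symmetric]) measurable
  then show ?thesis
    by (simp add: shift_energy_def power2_commute)
qed

lemma shift_energy_shift_add:
  fixes g :: "'a::euclidean_space \<Rightarrow> real"
  assumes [measurable]: "g \<in> borel_measurable borel"
  shows "shift_energy g (y + z) \<le> 2 * shift_energy g y + 2 * shift_energy g z"
proof -
  have "shift_energy g (y + z) \<le> (\<integral>\<^sup>+ x. 2 * ennreal ((g (x + z + y) - g (x + z))^2)
      + 2 * ennreal ((g (x + z) - g x)^2) \<partial>lborel)"
    unfolding shift_energy_def
    using ennreal_power2_diff_le[of "g (x + z + y)" "g x" "g (x + z)" for x]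
    by (intro nn_integral_mono) (simp add: ac_simps)
  also have "\<dots> = 2 * (\<integral>\<^sup>+ x. ennreal ((g (x + z + y) - g (x + z))^2) \<partial>lborel)
      + 2 * shift_energy g z"
    unfolding shift_energy_def by (simp add: nn_integral_add nn_integral_cmult)
  also have "(\<integral>\<^sup>+ x. ennreal ((g (x + z + y) - g (x + z))^2) \<partial>lborel) = shift_energy g y"
    unfolding shift_energy_def
    by (rule nn_integral_lborel_translate[where h = "\<lambda>x. ennreal ((g (x + y) - g x)^2)"]) measurable
  finally show ?thesis .
qed

lemma shift_energy_le_nn_integral_power2:
  fixes h :: "'a::euclidean_space \<Rightarrow> real"
  assumes [measurable]: "h \<in> borel_measurable borel"
  shows "shift_energy h y \<le> 4 * (\<integral>\<^sup>+ x. ennreal ((h x)^2) \<partial>lborel)"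
proof -
  have "shift_energy h y \<le> (\<integral>\<^sup>+ x. 2 * ennreal ((h (x + y))^2) + 2 * ennreal ((h x)^2) \<partial>lborel)"
    unfolding shift_energy_def
    using ennreal_power2_diff_le[of "h (x + y)" "h x" 0 for x]
    by (intro nn_integral_mono) simp
  also have "\<dots> = 2 * (\<integral>\<^sup>+ x. ennreal ((h (x + y))^2) \<partial>lborel) + 2 * (\<integral>\<^sup>+ x. ennreal ((h x)^2) \<partial>lborel)"
    by (simp add: nn_integral_add nn_integral_cmult)
  also have "(\<integral>\<^sup>+ x. ennreal ((h (x + y))^2) \<partial>lborel) = (\<integral>\<^sup>+ x. ennreal ((h x)^2) \<partial>lborel)"
    by (rule nn_integral_lborel_translate[where h = "\<lambda>x. ennreal ((h x)^2)"]) measurable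
  finally show ?thesis
    by (simp add: algebra_simps flip: distrib_right)
qed

section \<open>Continuity of translation in L^2\<close>

lemma ennreal_four_quarters: "0 \<le> e \<Longrightarrow> 2 * ennreal (e / 4) + 2 * ennreal (e / 4) = ennreal e"
  using ennreal_mult[of 4 "e / 4"] by (simp flip: distrib_right)

lemma shift_energy_indicator_tendsto_0:
  fixes S :: "'a::euclidean_space set"
  assumes S: "S \<in> sets borel" "emeasure lborel S < \<infinity>"
  shows "(shift_energy (indicator S) \<longlongrightarrow> 0) (at 0)"
proof (rule tendsto_zero_ennrealI)
  fix e :: real assume "e > 0"
  then have e4: "e / 4 > 0" by simp
  obtain U where U: "open U" "S \<subseteq> U" "emeasure lborel (U - S) < ennreal (e / 4)"
    using outer_regular_lborel[OF S(1) e4] by blast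
  obtain K where K: "compact K" "K \<subseteq> S" "emeasure lborel (S - K) < ennreal (e / 4)"
    using lborel_inner_regular_compact[OF S e4] by blast
  obtain d where "d > 0" and d: "(\<Union>x\<in>K. ball x d) \<subseteq> U"
    using compact_subset_open_imp_ball_epsilon_subset[OF K(1) U(1)] K(2) U(2) by blast
  define D1 D2 where "D1 = S - K" and "D2 = U - S"
  have [measurable]: "D1 \<in> sets borel" "D2 \<in> sets borel"
    using S K U by (auto simp: D1_def D2_def borel_compact borel_open)
  have "shift_energy (indicator S) y \<le> ennreal e" if "norm y < d" for y
  proof -
    \<comment> \<open>where the shifted indicator differs, x or x + y lies in S - K or U - S\<close>
    have "ennreal ((indicator S (x + y) - indicator S x)^2)
        \<le> indicator {x. x + y \<in> D1} x + indicator D1 x + indicator {x. x + y \<in> D2} x + indicator D2 x"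
      for x :: 'a
    proof -
      have "x \<in> U" if "x + y \<in> K" using d that \<open>norm y < d\<close> by (force simp: dist_norm)
      moreover have "x + y \<in> U" if "x \<in> K" using d that \<open>norm y < d\<close> by (force simp: dist_norm)
      ultimately show ?thesis using K(2) by (auto simp: indicator_def D1_def D2_def)
    qed
    then have "shift_energy (indicator S) y \<le> (\<integral>\<^sup>+ x. indicator {x. x + y \<in> D1} x
        + indicator D1 x + indicator {x. x + y \<in> D2} x + indicator D2 x \<partial>lborel)"
      unfolding shift_energy_def by (rule nn_integral_mono)
    also have "\<dots> = 2 * emeasure lborel D1 + 2 * emeasure lborel D2"
      by (simp add: nn_integral_add emeasure_lborel_translate mult_2)
    also have "\<dots> \<le> 2 * ennreal (e / 4) + 2 * ennreal (e / 4)"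
      using K(3) U(3) unfolding D1_def D2_def by (intro add_mono mult_left_mono) auto
    also have "\<dots> = ennreal e"
      using \<open>e > 0\<close> by (simp add: ennreal_four_quarters)
    finally show ?thesis .
  qed
  then show "eventually (\<lambda>y. shift_energy (indicator S) y \<le> ennreal e) (at 0)"
    unfolding eventually_at using \<open>d > 0\<close> by (auto simp: dist_norm)
qed

lemma shift_energy_add_tendsto_0:
  fixes g h :: "'a::euclidean_space \<Rightarrow> real"
  assumes "g \<in> borel_measurable borel" "h \<in> borel_measurable borel"
    and "(shift_energy g \<longlongrightarrow> 0) (at 0)" "(shift_energy h \<longlongrightarrow> 0) (at 0)"
  shows "(shift_energy (\<lambda>x. g x + h x) \<longlongrightarrow> 0) (at 0)"
proof (rule tendsto_sandwich[where f = "\<lambda>_. 0"])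
  show "\<forall>\<^sub>F y in at 0. shift_energy (\<lambda>x. g x + h x) y \<le> 2 * shift_energy g y + 2 * shift_energy h y"
    using shift_energy_add[OF assms(1,2)] by simp
  have "((\<lambda>y. 2 * shift_energy g y + 2 * shift_energy h y) \<longlongrightarrow> 2 * 0 + 2 * 0) (at 0)"
    using assms(3,4) by (intro tendsto_add ennreal_tendsto_cmult) auto
  then show "((\<lambda>y. 2 * shift_energy g y + 2 * shift_energy h y) \<longlongrightarrow> 0) (at 0)"
    by simp
qed auto

lemma shift_energy_sum_tendsto_0:
  fixes g :: "'b \<Rightarrow> 'a::euclidean_space \<Rightarrow> real"
  assumes "finite I" "\<And>i. i \<in> I \<Longrightarrow> g i \<in> borel_measurable borel"
    and "\<And>i. i \<in> I \<Longrightarrow> (shift_energy (g i) \<longlongrightarrow> 0) (at 0)"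
  shows "(shift_energy (\<lambda>x. \<Sum>i\<in>I. g i x) \<longlongrightarrow> 0) (at 0)"
  using assms
proof (induction I rule: finite_induct)
  case empty
  then show ?case by (simp add: shift_energy_def)
next
  case (insert i I)
  then show ?case
    by (simp add: shift_energy_add_tendsto_0 borel_measurable_sum)
qed

lemma shift_energy_simple_tendsto_0:
  fixes v :: "'a::euclidean_space \<Rightarrow> real"
  assumes [measurable]: "v \<in> borel_measurable borel" and "finite (range v)"
    and L2: "(\<integral>\<^sup>+ x. ennreal ((v x)^2) \<partial>lborel) < \<infinity>"
  shows "(shift_energy v \<longlongrightarrow> 0) (at 0)"
proof -
  define R where "R = range v - {0}"
  have "finite R" using assms(2) by (simp add: R_def)
  have v_eq: "v = (\<lambda>x. \<Sum>c\<in>R. c * indicator {x. v x = c} x)"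
  proof
    fix x
    have "(\<Sum>c\<in>R. c * indicator {x. v x = c} x) = (\<Sum>c\<in>R. if c = v x then v x else 0)"
      by (intro sum.cong) (auto simp: indicator_def)
    then show "v x = (\<Sum>c\<in>R. c * indicator {x. v x = c} x)"
      using \<open>finite R\<close> by (simp add: sum.delta' R_def)
  qed
  have "(shift_energy (\<lambda>x. c * indicator {x. v x = c} x) \<longlongrightarrow> 0) (at 0)" if "c \<in> R" for c
  proof -
    have "ennreal (c^2) * emeasure lborel {x. v x = c}
        = (\<integral>\<^sup>+ x. ennreal (c^2) * indicator {x. v x = c} x \<partial>lborel)"
      by (simp add: nn_integral_cmult_indicator)
    also have "\<dots> \<le> (\<integral>\<^sup>+ x. ennreal ((v x)^2) \<partial>lborel)"
      by (intro nn_integral_mono) (auto simp: indicator_def)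
    also note L2
    finally have "emeasure lborel {x. v x = c} < \<infinity>"
      using that by (auto simp: R_def ennreal_mult_less_top)
    then have "(shift_energy (indicator {x. v x = c}) \<longlongrightarrow> 0) (at 0)"
      by (intro shift_energy_indicator_tendsto_0) auto
    then have "((\<lambda>y. ennreal (c^2) * shift_energy (indicator {x. v x = c}) y) \<longlongrightarrow> ennreal (c^2) * 0) (at 0)"
      by (intro ennreal_tendsto_cmult) auto
    moreover have "{x. v x = c} \<in> sets borel"
      by measurable
    ultimately show ?thesis
      by (simp add: shift_energy_cmult[OF borel_measurable_indicator])
  qed
  then have "(shift_energy (\<lambda>x. \<Sum>c\<in>R. c * indicator {x. v x = c} x) \<longlongrightarrow> 0) (at 0)"
    using \<open>finite R\<close> by (intro shift_energy_sum_tendsto_0) auto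
  then show ?thesis using v_eq by simp
qed

lemma L2_approximation_simple_function:
  fixes g :: "'b \<Rightarrow> real"
  assumes g[measurable]: "g \<in> borel_measurable M"
    and L2: "(\<integral>\<^sup>+ x. ennreal ((g x)^2) \<partial>M) < \<infinity>" and "e > 0"
  obtains v where "v \<in> borel_measurable M" "finite (v ` space M)"
    "(\<integral>\<^sup>+ x. ennreal ((v x)^2) \<partial>M) < \<infinity>"
    "(\<integral>\<^sup>+ x. ennreal ((g x - v x)^2) \<partial>M) < ennreal e"
proof -
  obtain F where F: "\<And>i. simple_function M (F i)" "\<And>x. x \<in> space M \<Longrightarrow> (\<lambda>i. F i x) \<longlonglongrightarrow> g x"
    and F_le: "\<And>i x. x \<in> space M \<Longrightarrow> dist (F i x) 0 \<le> 2 * dist (g x) 0"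
    using borel_measurable_implies_sequence_metric[OF g, of 0] by metis
  have [measurable]: "F i \<in> borel_measurable M" for i
    using F(1) by (simp add: borel_measurable_simple_function)
  have F_sq: "(F i x)^2 \<le> 4 * (g x)^2" and diff_sq: "(g x - F i x)^2 \<le> 9 * (g x)^2"
    if "x \<in> space M" for i x
  proof -
    have F: "\<bar>F i x\<bar> \<le> 2 * \<bar>g x\<bar>" using F_le[OF that, of i] by simp
    then have "\<bar>F i x\<bar>^2 \<le> (2 * \<bar>g x\<bar>)^2"
      by (intro power_mono) auto
    then show "(F i x)^2 \<le> 4 * (g x)^2"
      by (simp add: power_mult_distrib)
    have "\<bar>g x - F i x\<bar> \<le> 3 * \<bar>g x\<bar>" using F by linarith
    then have "\<bar>g x - F i x\<bar>^2 \<le> (3 * \<bar>g x\<bar>)^2"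
      by (intro power_mono) auto
    then show "(g x - F i x)^2 \<le> 9 * (g x)^2"
      by (simp add: power_mult_distrib)
  qed
  have "(\<lambda>i. \<integral>\<^sup>+ x. ennreal ((g x - F i x)^2) \<partial>M) \<longlonglongrightarrow> (\<integral>\<^sup>+ x. ennreal 0 \<partial>M)"
  proof (rule nn_integral_dominated_convergence[where w = "\<lambda>x. ennreal (9 * (g x)^2)"])
    show "(\<integral>\<^sup>+ x. ennreal (9 * (g x)^2) \<partial>M) < \<infinity>"
      using L2 by (simp add: ennreal_mult nn_integral_cmult ennreal_mult_less_top)
    show "AE x in M. (\<lambda>i. ennreal ((g x - F i x)^2)) \<longlonglongrightarrow> ennreal 0"
      using F(2) by (intro AE_I2 tendsto_ennrealI) (auto intro!: tendsto_eq_intros)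
    show "AE x in M. ennreal ((g x - F i x)^2) \<le> ennreal (9 * (g x)^2)" for i
      using diff_sq by (intro AE_I2 ennreal_leI)
  qed auto
  then have "eventually (\<lambda>i. (\<integral>\<^sup>+ x. ennreal ((g x - F i x)^2) \<partial>M) < ennreal e) sequentially"
    using \<open>e > 0\<close> by (intro order_tendstoD(2)) auto
  then obtain i where i: "(\<integral>\<^sup>+ x. ennreal ((g x - F i x)^2) \<partial>M) < ennreal e"
    using eventually_sequentially by auto
  have "(\<integral>\<^sup>+ x. ennreal ((F i x)^2) \<partial>M) \<le> (\<integral>\<^sup>+ x. ennreal (4 * (g x)^2) \<partial>M)"
    using F_sq by (intro nn_integral_mono ennreal_leI)
  also have "\<dots> < \<infinity>"
    using L2 by (simp add: ennreal_mult nn_integral_cmult ennreal_mult_less_top)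
  finally show ?thesis
    using that[of "F i"] i simple_functionD(1)[OF F(1)] by auto
qed

lemma shift_energy_tendsto_0:
  fixes g :: "'a::euclidean_space \<Rightarrow> real"
  assumes g[measurable]: "g \<in> borel_measurable borel"
    and L2: "(\<integral>\<^sup>+ x. ennreal ((g x)^2) \<partial>lborel) < \<infinity>"
  shows "(shift_energy g \<longlongrightarrow> 0) (at 0)"
proof (rule tendsto_zero_ennrealI)
  fix e :: real assume "e > 0"
  then obtain v where [measurable]: "v \<in> borel_measurable borel" and v: "finite (range v)"
    "(\<integral>\<^sup>+ x. ennreal ((v x)^2) \<partial>lborel) < \<infinity>"
    "(\<integral>\<^sup>+ x. ennreal ((g x - v x)^2) \<partial>lborel) < ennreal (e / 16)"
    using L2_approximation_simple_function[OF _ L2, of "e / 16"] by auto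
  have "shift_energy (\<lambda>x. g x - v x) y \<le> 4 * ennreal (e / 16)" for y
    using shift_energy_le_nn_integral_power2[of "\<lambda>x. g x - v x" y] v(3)
    by (auto elim!: order_trans intro!: mult_left_mono)
  also have "4 * ennreal (e / 16) = ennreal (e / 4)"
    using ennreal_mult[of 4 "e / 16"] \<open>e > 0\<close> by simp
  finally have gv: "shift_energy (\<lambda>x. g x - v x) y \<le> ennreal (e / 4)" for y .
  have "eventually (\<lambda>y. shift_energy v y \<le> ennreal (e / 4)) (at 0)"
    using \<open>e > 0\<close> v by (intro eventually_le_ennreal_of_tendsto_zero shift_energy_simple_tendsto_0) auto
  then show "eventually (\<lambda>y. shift_energy g y \<le> ennreal e) (at 0)"
  proof eventually_elim
    case (elim y)
    have "shift_energy g y \<le> 2 * shift_energy (\<lambda>x. g x - v x) y + 2 * shift_energy v y"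
      using shift_energy_add[of "\<lambda>x. g x - v x" v y] by simp
    also have "\<dots> \<le> 2 * ennreal (e / 4) + 2 * ennreal (e / 4)"
      using gv elim by (intro add_mono mult_left_mono) auto
    also have "\<dots> = ennreal e"
      using \<open>e > 0\<close> by (simp add: ennreal_four_quarters)
    finally show ?case .
  qed
qed

section \<open>Control by the truncated energy\<close>

lemma borel_measurable_shift_energy [measurable]:
  fixes g :: "'a::euclidean_space \<Rightarrow> real"
  assumes [measurable]: "g \<in> borel_measurable borel"
  shows "shift_energy g \<in> borel_measurable borel"
proof -
  have "(\<lambda>(y, x). ennreal ((g (x + y) - g x)^2)) \<in> borel_measurable (lborel \<Otimes>\<^sub>M (lborel :: 'a measure))"
    by measurable
  then show ?thesis
    unfolding shift_energy_def[abs_def] using lborel.borel_measurable_nn_integral by fastforce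
qed

lemma nn_integral_density_truncated_energy:
  fixes g :: "'a::euclidean_space \<Rightarrow> real" and f :: "'a \<Rightarrow> ennreal"
  assumes [measurable]: "g \<in> borel_measurable borel" "f \<in> borel_measurable borel"
  shows "(\<integral>\<^sup>+ x. (\<integral>\<^sup>+ z. indicator {z. r < norm z} z * ennreal ((g (x + z) - g x)^2) \<partial>density lborel f) \<partial>lborel)
       = (\<integral>\<^sup>+ z. f z * indicator {z. r < norm z} z * shift_energy g z \<partial>lborel)"
proof -
  have "(\<integral>\<^sup>+ x. (\<integral>\<^sup>+ z. indicator {z. r < norm z} z * ennreal ((g (x + z) - g x)^2) \<partial>density lborel f) \<partial>lborel)
      = (\<integral>\<^sup>+ x. (\<integral>\<^sup>+ z. f z * (indicator {z. r < norm z} z * ennreal ((g (x + z) - g x)^2)) \<partial>lborel) \<partial>lborel)"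
    by (intro nn_integral_cong nn_integral_density) measurable
  also have "\<dots> = (\<integral>\<^sup>+ z. (\<integral>\<^sup>+ x. f z * (indicator {z. r < norm z} z * ennreal ((g (x + z) - g x)^2)) \<partial>lborel) \<partial>lborel)"
    by (rule lborel_pair.Fubini'[symmetric]) measurable
  also have "\<dots> = (\<integral>\<^sup>+ z. f z * indicator {z. r < norm z} z * shift_energy g z \<partial>lborel)"
    unfolding shift_energy_def by (simp add: nn_integral_cmult mult.assoc)
  finally show ?thesis .
qed

lemma one_le_density_times_shell_bound:
  fixes f :: "'a::euclidean_space \<Rightarrow> ennreal" and \<nu> :: "real \<Rightarrow> ennreal"
  assumes f_lower: "\<And>z. z \<noteq> 0 \<Longrightarrow> f z \<ge> 1 / (ennreal (norm z ^ DIM('a)) * \<nu> (norm z))"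
    and mono: "mono_on {0<..} \<nu>"
    and z: "0 < norm z" "norm z \<le> t" and \<nu>t: "\<nu> t < ennreal \<epsilon>"
  shows "1 \<le> f z * ennreal (t ^ DIM('a) * \<epsilon>)"
proof -
  define b where "b = ennreal (norm z ^ DIM('a)) * \<nu> (norm z)"
  have t: "0 < t" using z by linarith
  with z have "\<nu> (norm z) \<le> \<nu> t"
    using mono_onD[OF mono, of "norm z" t] by simp
  then have "b \<le> ennreal (t ^ DIM('a)) * ennreal \<epsilon>"
    unfolding b_def using z \<nu>t by (intro mult_mono ennreal_leI power_mono) auto
  also have "\<dots> = ennreal (t ^ DIM('a) * \<epsilon>)"
    using t by (simp add: ennreal_mult')
  finally have b: "b \<le> ennreal (t ^ DIM('a) * \<epsilon>)" .
  have f: "1 / b \<le> f z"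
    using f_lower[of z] z unfolding b_def by auto
  show ?thesis
  proof (cases "b = 0")
    case True
    then have "f z = \<infinity>" using f by (simp add: top_unique)
    moreover have "\<epsilon> > 0" using le_less_trans[OF zero_le \<nu>t] by simp
    ultimately show ?thesis using t by (simp add: ennreal_top_mult)
  next
    case False
    have "b < \<infinity>"
      using b by (simp add: le_less_trans)
    then have "1 = 1 / b * b"
      using False by (simp add: ennreal_divide_times)
    also have "\<dots> \<le> f z * ennreal (t ^ DIM('a) * \<epsilon>)"
      using f b by (intro mult_mono) auto
    finally show ?thesis .
  qed
qed

lemma nn_integral_shell_le_truncated_energy:
  fixes f :: "'a::euclidean_space \<Rightarrow> ennreal" and \<nu> :: "real \<Rightarrow> ennreal" and h :: "'a \<Rightarrow> ennreal"
  assumes [measurable]: "f \<in> borel_measurable borel" "h \<in> borel_measurable borel"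
    and f_lower: "\<And>z. z \<noteq> 0 \<Longrightarrow> f z \<ge> 1 / (ennreal (norm z ^ DIM('a)) * \<nu> (norm z))"
    and mono: "mono_on {0<..} \<nu>" and "r \<le> s" and \<nu>5s: "\<nu> (5 * s) < ennreal \<epsilon>"
    and B: "\<And>z. z \<in> B \<Longrightarrow> s < norm z \<and> norm z \<le> 5 * s"
  shows "(\<integral>\<^sup>+ z. indicator B z * h z \<partial>lborel)
    \<le> ennreal ((5 * s) ^ DIM('a) * \<epsilon>) * (\<integral>\<^sup>+ z. f z * indicator {z. r < norm z} z * h z \<partial>lborel)"
proof -
  let ?C = "ennreal ((5 * s) ^ DIM('a) * \<epsilon>)"
  have "indicator B z * h z \<le> ?C * (f z * indicator {z. r < norm z} z * h z)" for z
  proof (cases "z \<in> B")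
    case True
    with B have "0 < norm z" "norm z \<le> 5 * s" "r < norm z"
      using \<open>r \<le> s\<close> by force+
    then have "1 \<le> f z * ?C"
      using \<nu>5s by (intro one_le_density_times_shell_bound[OF f_lower mono])
    then have "1 * h z \<le> f z * ?C * h z"
      by (rule mult_right_mono) simp
    with True \<open>r < norm z\<close> show ?thesis
      by (simp add: mult_ac)
  qed simp
  then have "(\<integral>\<^sup>+ z. indicator B z * h z \<partial>lborel)
      \<le> (\<integral>\<^sup>+ z. ?C * (f z * indicator {z. r < norm z} z * h z) \<partial>lborel)"
    by (rule nn_integral_mono)
  also have "\<dots> = ?C * (\<integral>\<^sup>+ z. f z * indicator {z. r < norm z} z * h z \<partial>lborel)"
    by (rule nn_integral_cmult) measurable
  finally show ?thesis .
qed

lemma shift_energy_average: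
  fixes g :: "'a::euclidean_space \<Rightarrow> real"
  assumes [measurable]: "g \<in> borel_measurable borel" "A \<in> sets borel"
  shows "shift_energy g y * emeasure lborel A \<le> 2 * (\<integral>\<^sup>+ z. indicator A z * shift_energy g z \<partial>lborel)
    + 2 * (\<integral>\<^sup>+ z. indicator {z. z + y \<in> A} z * shift_energy g z \<partial>lborel)"
proof -
  let ?E = "shift_energy g"
  have "?E y * emeasure lborel A = (\<integral>\<^sup>+ z. ?E y * indicator A z \<partial>lborel)"
    by (simp add: nn_integral_cmult_indicator)
  also have "\<dots> \<le> (\<integral>\<^sup>+ z. 2 * (indicator A z * ?E z) + 2 * (indicator A z * ?E (z - y)) \<partial>lborel)"
  proof (rule nn_integral_mono)
    fix z
    have "?E (z + (y - z)) \<le> 2 * ?E z + 2 * ?E (y - z)"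
      by (rule shift_energy_shift_add) simp
    moreover have "?E (y - z) = ?E (z - y)"
      using shift_energy_minus[of g "z - y"] by simp
    ultimately show "?E y * indicator A z \<le> 2 * (indicator A z * ?E z) + 2 * (indicator A z * ?E (z - y))"
      by (simp add: indicator_def)
  qed
  also have "\<dots> = 2 * (\<integral>\<^sup>+ z. indicator A z * ?E z \<partial>lborel) + 2 * (\<integral>\<^sup>+ z. indicator A z * ?E (z - y) \<partial>lborel)"
    by (subst nn_integral_add) (measurable, simp add: nn_integral_cmult)
  also have "(\<integral>\<^sup>+ z. indicator A z * ?E (z - y) \<partial>lborel) = (\<integral>\<^sup>+ z. indicator A (z + y) * ?E z \<partial>lborel)"
    using nn_integral_lborel_translate[of "\<lambda>z. indicator A z * ?E (z - y)" y] by simp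
  also have "(\<lambda>z. indicator A (z + y)) = indicator {z. z + y \<in> A}"
    by (simp add: fun_eq_iff indicator_def)
  finally show ?thesis .
qed

lemma ennreal_le_mult_inverse:
  assumes "x * ennreal a \<le> y" "0 < a"
  shows "x \<le> y * ennreal (1 / a)"
proof -
  have "x = x * ennreal a * ennreal (1 / a)"
    using \<open>0 < a\<close> by (simp add: mult.assoc flip: ennreal_mult)
  also have "\<dots> \<le> y * ennreal (1 / a)"
    using assms(1) by (rule mult_right_mono) simp
  finally show ?thesis .
qed

lemma shift_energy_le_truncated_energy:
  fixes g :: "'a::euclidean_space \<Rightarrow> real" and f :: "'a \<Rightarrow> ennreal" and \<nu> :: "real \<Rightarrow> ennreal"
  assumes [measurable]: "g \<in> borel_measurable borel" "f \<in> borel_measurable borel"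
    and f_lower: "\<And>z. z \<noteq> 0 \<Longrightarrow> f z \<ge> 1 / (ennreal (norm z ^ DIM('a)) * \<nu> (norm z))"
    and mono: "mono_on {0<..} \<nu>"
    and s: "0 < s" "norm y \<le> s" "r \<le> s" and \<nu>5s: "\<nu> (5 * s) < ennreal \<epsilon>"
  shows "shift_energy g y \<le> ennreal (4 * 5 ^ DIM('a) * \<epsilon> / unit_ball_vol DIM('a))
    * (\<integral>\<^sup>+ z. f z * indicator {z. r < norm z} z * shift_energy g z \<partial>lborel)"
    (is "_ \<le> _ * ?I")
proof -
  let ?d = "DIM('a)" and ?V = "unit_ball_vol DIM('a)"
  let ?C = "ennreal ((5 * s) ^ ?d * \<epsilon>)"
  have \<epsilon>: "\<epsilon> > 0"
    using le_less_trans[OF zero_le \<nu>5s] by simp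
  have V: "?V > 0"
    by simp
  \<comment> \<open>a ball of radius s whose translates by vectors of length at most s stay in the shell\<close>
  obtain b :: 'a where b: "b \<in> Basis" using nonempty_Basis by blast
  define c where "c = (3 * s) *\<^sub>R b"
  have shell: "s < norm (z + w) \<and> norm (z + w) \<le> 5 * s" if "z \<in> ball c s" "norm w \<le> s" for z w
  proof -
    have "norm (z + w - c) < 2 * s"
      using that norm_triangle_ineq[of "z - c" w] by (simp add: dist_norm norm_minus_commute algebra_simps)
    moreover have "\<bar>norm (z + w) - norm c\<bar> \<le> norm (z + w - c)"
      by (rule norm_triangle_ineq3)
    moreover have "norm c = 3 * s"
      using b s by (simp add: c_def)
    ultimately show ?thesis by linarith
  qed
  have "shift_energy g y * ennreal (?V * s ^ ?d) \<le> 2 * (?C * ?I) + 2 * (?C * ?I)"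
  proof -
    have "shift_energy g y * ennreal (?V * s ^ ?d) = shift_energy g y * emeasure lborel (ball c s)"
      using s by (simp add: emeasure_ball)
    also have "\<dots> \<le> 2 * (\<integral>\<^sup>+ z. indicator (ball c s) z * shift_energy g z \<partial>lborel)
        + 2 * (\<integral>\<^sup>+ z. indicator {z. z + y \<in> ball c s} z * shift_energy g z \<partial>lborel)"
      by (rule shift_energy_average) simp_all
    also have "\<dots> \<le> 2 * (?C * ?I) + 2 * (?C * ?I)"
      using shell[of _ 0] shell[of "_ + y" "- y"] s \<nu>5s
      by (intro add_mono mult_left_mono nn_integral_shell_le_truncated_energy[OF _ _ f_lower mono]) auto
    finally show ?thesis .
  qed
  also have "\<dots> = 4 * ?C * ?I"
    by (simp add: mult.assoc flip: distrib_right)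
  finally have "shift_energy g y \<le> 4 * ?C * ?I * ennreal (1 / (?V * s ^ ?d))"
    using s V by (intro ennreal_le_mult_inverse) auto
  also have "\<dots> = ennreal (4 * ((5 * s) ^ ?d * \<epsilon>) * (1 / (?V * s ^ ?d))) * ?I"
    using s \<epsilon> by (simp add: ennreal_mult'' ennreal_mult mult_ac del: times_divide_eq_right)
  also have "4 * ((5 * s) ^ ?d * \<epsilon>) * (1 / (?V * s ^ ?d)) = 4 * 5 ^ ?d * \<epsilon> / ?V"
    using s V by (simp add: power_mult_distrib)
  finally show ?thesis .
qed

lemma bounded_of_SUP_half_less_top:
  fixes T :: "'i \<Rightarrow> ennreal"
  assumes "(SUP i\<in>I. (1/2) * T i) < \<infinity>"
  obtains M where "0 \<le> M" "\<And>i. i \<in> I \<Longrightarrow> T i \<le> ennreal M"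
proof -
  have "2 * (SUP i\<in>I. (1/2) * T i) < \<infinity>"
    using assms by (simp add: ennreal_mult_less_top)
  then obtain M where M: "2 * (SUP i\<in>I. (1/2) * T i) = ennreal M" "0 \<le> M"
    by (cases "2 * (SUP i\<in>I. (1/2) * T i)") auto
  have "T i \<le> ennreal M" if "i \<in> I" for i
  proof -
    have "(2::ennreal) * (1/2) = 1"
      by (simp add: ennreal_times_divide)
    then have "T i = 2 * ((1/2) * T i)"
      by (simp add: mult.assoc[symmetric])
    also have "\<dots> \<le> 2 * (SUP i\<in>I. (1/2) * T i)"
      using that by (intro mult_left_mono SUP_upper) auto
    finally show ?thesis
      using M(1) by simp
  qed
  with M(2) show ?thesis
    using that by blast
qed

lemma eventually_uniform_shift_energy_le:
  fixes \<phi> :: "nat \<Rightarrow> 'a::euclidean_space \<Rightarrow> real" and f :: "'a \<Rightarrow> ennreal" and \<nu> :: "real \<Rightarrow> ennreal"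
  assumes [measurable]: "\<And>n. \<phi> n \<in> borel_measurable borel" "f \<in> borel_measurable borel"
    and L2: "\<And>n. (\<integral>\<^sup>+ x. ennreal ((\<phi> n x)^2) \<partial>lborel) < \<infinity>"
    and f_lower: "\<And>z. z \<noteq> 0 \<Longrightarrow> f z \<ge> 1 / (ennreal (norm z ^ DIM('a)) * \<nu> (norm z))"
    and mono: "mono_on {0<..} \<nu>" and \<nu>_lim: "(\<nu> \<longlongrightarrow> 0) (at_right 0)"
    and bound: "\<And>n. n \<ge> 1 \<Longrightarrow>
      (\<integral>\<^sup>+ z. f z * indicator {z. 1 / real n < norm z} z * shift_energy (\<phi> n) z \<partial>lborel) \<le> ennreal M"
    and "0 \<le> M" "0 < \<delta>"
  shows "eventually (\<lambda>y. \<forall>n\<in>{1..}. shift_energy (\<phi> n) y \<le> ennreal \<delta>) (at 0)"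
proof -
  define V where "V = unit_ball_vol DIM('a)"
  have "V > 0"
    unfolding V_def by simp
  define \<epsilon> where "\<epsilon> = \<delta> * V / (4 * 5 ^ DIM('a) * (M + 1))"
  have "\<epsilon> > 0"
    unfolding \<epsilon>_def using \<open>V > 0\<close> \<open>0 \<le> M\<close> \<open>0 < \<delta>\<close> by simp
  then have "eventually (\<lambda>t. \<nu> t < ennreal \<epsilon>) (at_right 0)"
    using \<nu>_lim by (intro order_tendstoD(2)) auto
  then obtain d where "d > 0" and d: "\<And>t. 0 < t \<Longrightarrow> t < d \<Longrightarrow> \<nu> t < ennreal \<epsilon>"
    unfolding eventually_at_right[OF zero_less_one] by auto
  obtain N :: nat where "N > 0" and N: "1 / real N < d / 5"
    using \<open>d > 0\<close> by (metis divide_pos_pos ex_inverse_of_nat_less inverse_eq_divide zero_less_numeral)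
  have large: "shift_energy (\<phi> n) y \<le> ennreal \<delta>" if "N \<le> n" "norm y < d / 5" for n y
  proof -
    \<comment> \<open>one scale dominating both the shift and the truncation radius\<close>
    define s where "s = max (norm y) (1 / real n)"
    have "1 / real n \<le> 1 / real N" "0 < 1 / real n"
      using that(1) \<open>N > 0\<close> by (auto intro!: divide_left_mono)
    then have "0 < s" "5 * s < d"
      using that(2) N unfolding s_def by (auto simp: less_max_iff_disj)
    then have "shift_energy (\<phi> n) y \<le> ennreal (4 * 5 ^ DIM('a) * \<epsilon> / V)
        * (\<integral>\<^sup>+ z. f z * indicator {z. 1 / real n < norm z} z * shift_energy (\<phi> n) z \<partial>lborel)"
      using d[of "5 * s"]
      unfolding V_def by (intro shift_energy_le_truncated_energy[OF _ _ f_lower mono]) (auto simp: s_def)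
    also have "\<dots> \<le> ennreal (4 * 5 ^ DIM('a) * \<epsilon> / V) * ennreal M"
      using that \<open>N > 0\<close> by (intro mult_left_mono bound) auto
    also have "\<dots> = ennreal (\<delta> * (M / (M + 1)))"
      using \<open>V > 0\<close> \<open>0 \<le> M\<close> \<open>0 < \<delta>\<close> by (simp add: \<epsilon>_def ennreal_mult[symmetric])
    also have "\<dots> \<le> ennreal \<delta>"
      using \<open>0 \<le> M\<close> \<open>0 < \<delta>\<close> by (intro ennreal_leI mult_left_le) auto
    finally show ?thesis .
  qed
  have small: "eventually (\<lambda>y. \<forall>n\<in>{1..<N}. shift_energy (\<phi> n) y \<le> ennreal \<delta>) (at 0)"
    using L2 \<open>0 < \<delta>\<close>
    by (intro eventually_ball_finite ballI eventually_le_ennreal_of_tendsto_zero shift_energy_tendsto_0) auto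
  moreover have "eventually (\<lambda>y. norm y < d / 5) (at 0)"
    unfolding eventually_at using \<open>d > 0\<close> by (intro exI[of _ "d / 5"]) (auto simp: dist_norm)
  ultimately show ?thesis
    by eventually_elim (use large not_less in auto)
qed

lemma L2_norm_shift_eq:
  fixes g :: "'a::euclidean_space \<Rightarrow> real"
  assumes [measurable]: "g \<in> borel_measurable borel"
  shows "L2_norm (\<lambda>x. g (x + y) - g x) = sqrt (enn2real (shift_energy g y))"
  unfolding L2_norm_def shift_energy_def by (subst integral_eq_nn_integral) auto

lemma Sup_L2_norm_shift_tendsto_0:
  fixes \<phi> :: "'i \<Rightarrow> 'a::euclidean_space \<Rightarrow> real"
  assumes "\<And>i. i \<in> I \<Longrightarrow> \<phi> i \<in> borel_measurable borel"
    and "\<And>\<delta>. \<delta> > 0 \<Longrightarrow> eventually (\<lambda>y. \<forall>i\<in>I. shift_energy (\<phi> i) y \<le> ennreal \<delta>) (at 0)"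
  shows "((\<lambda>y. SUP i\<in>I. ennreal (L2_norm (\<lambda>x. \<phi> i (x + y) - \<phi> i x))) \<longlongrightarrow> 0) (at 0)"
proof (rule tendsto_zero_ennrealI)
  fix e :: real assume "e > 0"
  have "L2_norm (\<lambda>x. \<phi> i (x + y) - \<phi> i x) \<le> e"
    if "i \<in> I" "shift_energy (\<phi> i) y \<le> ennreal (e^2)" for i y
  proof -
    have "enn2real (shift_energy (\<phi> i) y) \<le> e^2"
      using that(2) by (cases "shift_energy (\<phi> i) y") (auto simp: ennreal_le_iff)
    then have "sqrt (enn2real (shift_energy (\<phi> i) y)) \<le> sqrt (e^2)"
      by (rule real_sqrt_le_mono)
    then have "sqrt (enn2real (shift_energy (\<phi> i) y)) \<le> e"
      using \<open>e > 0\<close> by simp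
    then show ?thesis
      using assms(1)[OF that(1)] by (simp add: L2_norm_shift_eq)
  qed
  with assms(2)[of "e^2"] \<open>e > 0\<close>
  show "eventually (\<lambda>y. (SUP i\<in>I. ennreal (L2_norm (\<lambda>x. \<phi> i (x + y) - \<phi> i x))) \<le> ennreal e) (at 0)"
    by (auto elim!: eventually_mono intro!: SUP_least ennreal_leI)
qed

theorem mainTheorem17:
  fixes \<mu> :: "'a::euclidean_space measure"
    and f :: "'a \<Rightarrow> ennreal"
    and \<nu> :: "real \<Rightarrow> ennreal"
    and \<phi> :: "nat \<Rightarrow> 'a \<Rightarrow> real"
  assumes levy: "levy_measure \<mu>"
    and f_meas: "f \<in> borel_measurable borel"
    and dens: "\<mu> = density lborel f"
    and f_lower: "\<And>z. z \<noteq> 0 \<Longrightarrow>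
         f z \<ge> 1 / (ennreal (norm z ^ DIM('a)) * \<nu> (norm z))"
    and \<nu>_mono: "mono_on {0<..} \<nu>"
    and \<nu>_lim: "(\<nu> \<longlongrightarrow> 0) (at_right 0)"
    and \<phi>_meas: "\<And>n. \<phi> n \<in> borel_measurable lborel"
    and \<phi>_L2: "\<And>n. integrable lborel (\<lambda>x. (\<phi> n x)^2)"
    and bdd: "(SUP n\<in>{1::nat..}. (1/2) *
          (\<integral>\<^sup>+ x. (\<integral>\<^sup>+ z. indicator {z. norm z > 1 / real n} z
                * ennreal ((\<phi> n (x + z) - \<phi> n x)^2) \<partial>\<mu>) \<partial>lborel)) < \<infinity>"
  shows "((\<lambda>y. SUP n\<in>{1::nat..}. ennreal (L2_norm (\<lambda>x. \<phi> n (x + y) - \<phi> n x)))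
           \<longlongrightarrow> 0) (at 0)"
proof -
  have [measurable]: "\<phi> n \<in> borel_measurable borel" for n
    using \<phi>_meas by simp
  have L2: "(\<integral>\<^sup>+ x. ennreal ((\<phi> n x)^2) \<partial>lborel) < \<infinity>" for n
    using integrableD(2)[OF \<phi>_L2[of n]] by (simp add: less_top)
  obtain M where "0 \<le> M" and "\<And>n. n \<in> {1..} \<Longrightarrow> (\<integral>\<^sup>+ x. (\<integral>\<^sup>+ z. indicator {z. norm z > 1 / real n} z
      * ennreal ((\<phi> n (x + z) - \<phi> n x)^2) \<partial>\<mu>) \<partial>lborel) \<le> ennreal M"
    using bounded_of_SUP_half_less_top[OF bdd] by blast
  then have M: "(\<integral>\<^sup>+ z. f z * indicator {z. 1 / real n < norm z} z * shift_energy (\<phi> n) z \<partial>lborel) \<le> ennreal M"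
    if "n \<ge> 1" for n
    using that by (simp add: dens nn_integral_density_truncated_energy f_meas)
  show ?thesis
    using L2 M \<open>0 \<le> M\<close>
    by (intro Sup_L2_norm_shift_tendsto_0 eventually_uniform_shift_energy_le[OF _ f_meas _ f_lower \<nu>_mono \<nu>_lim]) auto
qed

end
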